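(* Let $\alpha\in[\tfrac12,1)$, $N_1\ge N_2\ge1$, and for $\tau\in\mathbb N$ let $$\Lambda_{N_1,N_2,\tau}=\{(n_1,n_2)\in\mathbb N^2:\ n_1\sim N_1,\ n_2\sim N_2,\ |z_{n_1}^{2\alpha}+z_{n_2}^{2\alpha}-\tau|\le\tfrac12\}.$$ Then (1) $\#\Lambda_{N_1,N_2,\tau}=O(N_2)$ uniformly in $\tau$; and (2) for $n_1\sim N_1$, $n_2\sim N_2$ and every $\varepsilon>0$, $\|e_{n_1}e_{n_2}\|_{L^2(\Theta)}^2\lesssim_\varepsilon N_2^{\varepsilon}$.
   Context: $\Theta\subset\mathbb R^2$ is the unit disk; $0<z_1<z_2<\cdots$ are the positive zeros of the Bessel function $J_0$ (so $z_n=\pi(n-\frac12)+O(1/n)$), and $e_n(x)=\|J_0(z_n|\cdot|)\|_{L^2(\Theta)}^{-1}J_0(z_n|x|)$ are the normalized radial Dirichlet eigenfunctions of $-\Delta$ on $\Theta$. $n\sim N$ means $N\le n<2N$ (up to fixed constants). *)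

theory Defs
  imports "HOL-Analysis.Analysis"
begin

definition J0 :: "real \<Rightarrow> real" where
  "J0 x = (\<Sum>k. ((-1) ^ k / (fact k)\<^sup>2) * (x / 2) ^ (2 * k))"

text \<open>The n-th positive zero of J0 (n \<ge> 1): the positive zero having exactly n-1
  positive zeros strictly below it.\<close>
definition bessel_zero :: "nat \<Rightarrow> real" where
  "bessel_zero n = (THE x. 0 < x \<and> J0 x = 0 \<and>
      card {y. 0 < y \<and> y < x \<and> J0 y = 0} = n - 1)"

definition Theta :: "(real ^ 2) set" where
  "Theta = ball 0 1"

definition L2sq :: "(real ^ 2 \<Rightarrow> real) \<Rightarrow> real" where
  "L2sq f = (LINT x : Theta | lborel. (f x)\<^sup>2)"

text \<open>Normalized radial Dirichlet eigenfunctions.\<close>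
definition efun :: "nat \<Rightarrow> real ^ 2 \<Rightarrow> real" where
  "efun n x = J0 (bessel_zero n * norm x) / sqrt (L2sq (\<lambda>y. J0 (bessel_zero n * norm y)))"

definition sim :: "nat \<Rightarrow> nat \<Rightarrow> bool" where
  "sim n N \<longleftrightarrow> N \<le> n \<and> n < 2 * N"

definition Lambda :: "real \<Rightarrow> nat \<Rightarrow> nat \<Rightarrow> nat \<Rightarrow> (nat \<times> nat) set" where
  "Lambda \<alpha> N1 N2 \<tau> = {(n1, n2). sim n1 N1 \<and> sim n2 N2 \<and>
     \<bar>bessel_zero n1 powr (2 * \<alpha>) + bessel_zero n2 powr (2 * \<alpha>) - real \<tau>\<bar> \<le> 1 / 2}"

end

theory Submission
  imports Defs
begin

text \<open>
  The Bessel function \<open>J\<^sub>0\<close> is an entire power series solving \<open>x y'' + y' + x y = 0\<close>. Along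
  solutions, \<open>J\<^sub>0\<^sup>2 + J\<^sub>0'\<^sup>2\<close> is nonincreasing, so \<open>|J\<^sub>0|, |J\<^sub>0'| \<le> 1\<close>, and the modified energy
  \<open>F(x) = x (J\<^sub>0\<^sup>2 + J\<^sub>0'\<^sup>2) + J\<^sub>0 J\<^sub>0' + J\<^sub>0\<^sup>2 / (2x) \<ge> x J\<^sub>0\<^sup>2\<close> satisfies \<open>F' = -J\<^sub>0\<^sup>2 / (2x\<^sup>2)\<close>.
  Hence \<open>F\<close> decreases while \<open>F(x) exp (-1/(4x\<^sup>2))\<close> increases, and beyond a point \<open>x\<^sub>0\<close> where
  \<open>J\<^sub>0 > 1/2\<close> the energy is pinched between two positive constants. This gives the decay
  \<open>x J\<^sub>0(x)\<^sup>2 \<lesssim> 1\<close>, and at a zero \<open>z\<close> the lower bound \<open>z J\<^sub>0'(z)\<^sup>2 \<greatersim> 1\<close>, which by Rolle and the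
  mean value theorem keeps distinct zeros a fixed distance apart. A Sturm comparison with
  \<open>sin (t - a)\<close> puts a zero in every interval of length \<open>\<pi>\<close>, so \<open>z\<^sub>n = O(n)\<close>.

  For (1), fix \<open>n\<^sub>2\<close>: as \<open>2\<alpha> \<ge> 1\<close>, the \<open>z\<^sub>n\<^sub>1\<close> with \<open>z\<^sub>n\<^sub>1\<^bsup>2\<alpha>\<^esup>\<close> in a unit window lie in an
  interval of bounded length, hence are boundedly many by the separation.
  For (2), in polar coordinates \<open>\<parallel>J\<^sub>0(z|\<cdot>|)\<parallel>\<^sup>2 = \<pi> J\<^sub>0'(z)\<^sup>2 \<greatersim> 1/z\<close>, while the decay bound gives
  \<open>\<integral>\<^sub>0\<^sup>1 r J\<^sub>0(ar)\<^sup>2 J\<^sub>0(br)\<^sup>2 dr \<lesssim> ln (1 + b) / (a b)\<close>; so \<open>\<parallel>e\<^sub>n\<^sub>1 e\<^sub>n\<^sub>2\<parallel>\<^sup>2 \<lesssim> ln (1 + z\<^sub>n\<^sub>2) \<lesssim> N\<^sub>2\<^sup>\<epsilon>\<close>.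
\<close>

section \<open>The Bessel equation\<close>

definition J0_coeff :: "nat \<Rightarrow> real" where
  "J0_coeff n = (if even n then (-1)^(n div 2) / (fact (n div 2))^2 / 2^n else 0)"

lemma fact_double_le: "(fact (2*k) :: real) \<le> (fact k)^2 * 4^k"
proof -
  have "fact k * fact (2*k - k) * (2*k choose k) = (fact (2*k) :: nat)"
    using binomial_fact_lemma[of k "2*k"] by linarith
  hence "(fact (2*k) :: real) = fact k * fact k * real (2*k choose k)"
    by (metis mult_2 diff_add_inverse2 of_nat_mult of_nat_fact)
  also have "real (2*k choose k) \<le> 4^k"
    using binomial_le_pow2[of "2*k" k] by (simp add: power_mult flip: of_nat_le_iff)
  hence "fact k * fact k * real (2*k choose k) \<le> fact k * fact k * 4^k"
    by (intro mult_left_mono) auto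
  finally show ?thesis by (simp add: power2_eq_square)
qed

lemma abs_J0_coeff_le: "\<bar>J0_coeff n\<bar> \<le> 1 / fact n"
proof (cases "even n")
  case True
  then obtain k where n: "n = 2*k" by auto
  have "1 / ((fact k)^2 * 4^k) \<le> (1 / fact (2*k) :: real)"
    using fact_double_le[of k] by (intro divide_left_mono) auto
  thus ?thesis using n by (simp add: J0_coeff_def power_mult)
qed (simp add: J0_coeff_def)

lemma summable_J0_coeff: "summable (\<lambda>n. J0_coeff n * y^n)"
proof (rule summable_comparison_test)
  have "norm (J0_coeff n * y ^ n) \<le> \<bar>y\<bar>^n / fact n" for n
    using mult_right_mono[OF abs_J0_coeff_le[of n], of "\<bar>y\<bar>^n"] by (simp add: abs_mult power_abs)
  thus "\<exists>N. \<forall>n\<ge>N. norm (J0_coeff n * y ^ n) \<le> \<bar>y\<bar>^n / fact n" by blast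
  show "summable (\<lambda>n. \<bar>y\<bar>^n / fact n)"
    using summable_exp[of "\<bar>y\<bar>"] by (simp add: inverse_eq_divide)
qed

lemma J0_eq_powser: "J0 x = (\<Sum>n. J0_coeff n * x^n)"
proof -
  let ?f = "\<lambda>n. J0_coeff n * x^n"
  have "(\<lambda>k. ?f (2*k)) sums s \<longleftrightarrow> ?f sums s" for s
    by (rule sums_mono_reindex) (auto simp: strict_mono_def J0_coeff_def)
  hence "(\<lambda>k. ?f (2*k)) sums (suminf ?f)"
    using summable_sums[OF summable_J0_coeff] by blast
  moreover have "?f (2*k) = ((-1) ^ k / (fact k)\<^sup>2) * (x / 2) ^ (2 * k)" for k
    by (simp add: J0_coeff_def power_divide)
  ultimately show ?thesis unfolding J0_def by (simp add: sums_iff)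
qed

definition J0' :: "real \<Rightarrow> real" where
  "J0' x = (\<Sum>n. diffs J0_coeff n * x^n)"

definition J0'' :: "real \<Rightarrow> real" where
  "J0'' x = (\<Sum>n. diffs (diffs J0_coeff) n * x^n)"

lemma summable_diffs_J0_coeff: "summable (\<lambda>n. diffs J0_coeff n * y^n)"
  by (rule termdiff_converges_all) (rule summable_J0_coeff)

lemma summable_diffs2_J0_coeff: "summable (\<lambda>n. diffs (diffs J0_coeff) n * y^n)"
  by (rule termdiff_converges_all) (rule summable_diffs_J0_coeff)

lemma J0_has_real_derivative: "(J0 has_real_derivative J0' x) (at x)"
proof -
  have "J0 = (\<lambda>x. \<Sum>n. J0_coeff n * x^n)" using J0_eq_powser by auto
  thus ?thesis unfolding J0'_def
    using termdiffs_strong_converges_everywhere[of J0_coeff x] summable_J0_coeff by simp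
qed

lemma J0'_has_real_derivative: "(J0' has_real_derivative J0'' x) (at x)"
  unfolding J0'_def J0''_def
  using termdiffs_strong_converges_everywhere[of "diffs J0_coeff" x] summable_diffs_J0_coeff
  by simp

lemma J0_has_real_derivative_chain [derivative_intros]:
  "(f has_real_derivative f') (at x within s) \<Longrightarrow>
    ((\<lambda>x. J0 (f x)) has_real_derivative J0' (f x) * f') (at x within s)"
  by (rule DERIV_chain2[OF J0_has_real_derivative])

lemma J0'_has_real_derivative_chain [derivative_intros]:
  "(f has_real_derivative f') (at x within s) \<Longrightarrow>
    ((\<lambda>x. J0' (f x)) has_real_derivative J0'' (f x) * f') (at x within s)"
  by (rule DERIV_chain2[OF J0'_has_real_derivative])

lemma isCont_J0: "isCont J0 x"
  using J0_has_real_derivative DERIV_isCont by blast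

lemma continuous_on_J0: "continuous_on S J0"
  by (simp add: continuous_at_imp_continuous_on isCont_J0)

lemma continuous_on_J0_comp [continuous_intros]:
  "continuous_on s f \<Longrightarrow> continuous_on s (\<lambda>x. J0 (f x))"
  by (rule continuous_on_compose2[OF continuous_on_J0[of UNIV]]) auto

lemma borel_measurable_J0 [measurable]: "J0 \<in> borel_measurable borel"
  by (rule borel_measurable_continuous_onI[OF continuous_on_J0])

lemma J0_0 [simp]: "J0 0 = 1"
  using powser_zero[of J0_coeff] by (simp add: J0_eq_powser J0_coeff_def)

lemma J0'_0 [simp]: "J0' 0 = 0"
  using powser_zero[of "diffs J0_coeff"] by (simp add: J0'_def diffs_def J0_coeff_def)

lemma sums_shift_mult:
  fixes a :: "nat \<Rightarrow> 'a :: real_normed_field"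
  assumes "(\<lambda>n. a n * x^n) sums s"
  shows "(\<lambda>n. (if n = 0 then 0 else a (n - 1)) * x^n) sums (x * s)"
proof -
  have "(\<lambda>n. x * (a n * x^n)) sums (x * s)" using sums_mult[OF assms] .
  hence "(\<lambda>n. (\<lambda>n. (if n = 0 then 0 else a (n - 1)) * x^n) (Suc n)) sums (x * s)"
    by (simp add: algebra_simps)
  thus ?thesis by (subst (asm) sums_Suc_iff) simp
qed

lemma J0_coeff_recurrence:
  "(if n = 0 then 0 else diffs (diffs J0_coeff) (n - 1)) + diffs J0_coeff n
    + (if n = 0 then 0 else J0_coeff (n - 1)) = 0"
proof (cases n)
  case (Suc m)
  have diffs: "diffs (diffs J0_coeff) m + diffs J0_coeff (Suc m)
      = real (Suc (Suc m))^2 * J0_coeff (Suc (Suc m))"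
    by (simp add: diffs_def power2_eq_square algebra_simps)
  show ?thesis
  proof (cases "even m")
    case True
    then obtain k where m: "m = 2*k" by auto
    have "J0_coeff (Suc (Suc m)) = (-1)^(Suc k) / (real (Suc k) * fact k)^2 / (4 * 2^(2*k))"
      unfolding J0_coeff_def using m by simp
    moreover have "J0_coeff m = (-1)^k / (fact k)^2 / 2^(2*k)"
      unfolding J0_coeff_def using m by simp
    moreover have "real (Suc (Suc m))^2 = 4 * (real (Suc k))^2"
      using m by (simp add: power2_eq_square algebra_simps)
    moreover have "4 * q^2 * ((- A) / (q * F)^2 / (4 * P)) + A / F^2 / P = 0"
      if "F > 0" "P > 0" "q > 0" for A F P q :: real
      using that by (simp add: field_simps power2_eq_square)
    ultimately have "real (Suc (Suc m))^2 * J0_coeff (Suc (Suc m)) + J0_coeff m = 0"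
      by simp
    thus ?thesis using Suc diffs by simp
  qed (use Suc diffs in \<open>simp add: J0_coeff_def\<close>)
qed (simp add: diffs_def J0_coeff_def)

lemma J0_bessel_ode: "x * J0'' x + J0' x + x * J0 x = 0"
proof -
  have "(\<lambda>n. (if n = 0 then 0 else diffs (diffs J0_coeff) (n - 1)) * x^n + diffs J0_coeff n * x^n
          + (if n = 0 then 0 else J0_coeff (n - 1)) * x^n) sums (x * J0'' x + J0' x + x * J0 x)"
    unfolding J0''_def J0'_def J0_eq_powser
    by (intro sums_add sums_shift_mult summable_sums summable_J0_coeff summable_diffs_J0_coeff
        summable_diffs2_J0_coeff)
  moreover have "(\<lambda>n. (if n = 0 then 0 else diffs (diffs J0_coeff) (n - 1)) * x^n
          + diffs J0_coeff n * x^n + (if n = 0 then 0 else J0_coeff (n - 1)) * x^n) = (\<lambda>n. 0)"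
    using J0_coeff_recurrence by (simp add: fun_eq_iff flip: distrib_right)
  ultimately show ?thesis using sums_unique2 sums_zero by metis
qed

lemma J0''_eq: "x \<noteq> 0 \<Longrightarrow> J0'' x = - J0' x / x - J0 x"
  using J0_bessel_ode[of x] by (simp add: field_simps)

section \<open>Energy estimates\<close>

lemma J0_sq_add_J0'_sq_le_1:
  assumes "0 \<le> x"
  shows "J0 x ^2 + J0' x ^2 \<le> 1"
proof -
  have "J0 x ^2 + J0' x ^2 \<le> J0 0 ^2 + J0' 0 ^2"
  proof (rule DERIV_nonpos_imp_nonincreasing[OF assms])
    fix t assume t: "0 \<le> t" "t \<le> x"
    have "2*J0 t*J0' t + 2*J0' t*J0'' t \<le> 0"
    proof (cases "t = 0")
      case False
      hence "2*J0 t*J0' t + 2*J0' t*J0'' t = - 2 * J0' t ^2 / t"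
        by (simp add: J0''_eq field_simps power2_eq_square)
      also have "\<dots> \<le> 0" using t False by (simp add: divide_nonpos_pos)
      finally show ?thesis .
    qed simp
    moreover have "((\<lambda>t. J0 t ^2 + J0' t ^2) has_real_derivative
        2*J0 t*J0' t + 2*J0' t*J0'' t) (at t)"
      by (auto intro!: derivative_eq_intros J0_has_real_derivative J0'_has_real_derivative)
    ultimately show "\<exists>y. ((\<lambda>t. J0 t ^2 + J0' t ^2) has_real_derivative y) (at t) \<and> y \<le> 0"
      by blast
  qed
  thus ?thesis by simp
qed

lemma abs_J0_le_1: "0 \<le> x \<Longrightarrow> \<bar>J0 x\<bar> \<le> 1"
  using J0_sq_add_J0'_sq_le_1[of x] zero_le_power2[of "J0' x"] abs_square_le_1[of "J0 x"]
  by linarith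

lemma abs_J0'_le_1: "0 \<le> x \<Longrightarrow> \<bar>J0' x\<bar> \<le> 1"
  using J0_sq_add_J0'_sq_le_1[of x] zero_le_power2[of "J0 x"] abs_square_le_1[of "J0' x"]
  by linarith

definition J0_energy :: "real \<Rightarrow> real" where
  "J0_energy x = x * (J0 x ^2 + J0' x ^2) + J0 x * J0' x + J0 x ^2 / (2 * x)"

lemma J0_energy_has_real_derivative:
  assumes "x > 0"
  shows "(J0_energy has_real_derivative (- (J0 x ^2) / (2 * x^2))) (at x)"
proof -
  have "(J0_energy has_real_derivative
     (J0 x ^2 + J0' x ^2) + x * (2*J0 x*J0' x + 2*J0' x*J0'' x) + (J0' x * J0' x + J0 x * J0'' x)
      + ((2 * J0 x * J0' x) * (2 * x) - J0 x^2 * 2) / (2*x)^2) (at x)"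
    unfolding J0_energy_def using assms
    by (auto intro!: derivative_eq_intros J0_has_real_derivative J0'_has_real_derivative
        simp: power2_eq_square mult_ac)
  moreover have "(J0 x ^2 + J0' x ^2) + x * (2*J0 x*J0' x + 2*J0' x*J0'' x)
      + (J0' x * J0' x + J0 x * J0'' x) + ((2 * J0 x * J0' x) * (2 * x) - J0 x^2 * 2) / (2*x)^2
      = - (J0 x ^2) / (2 * x^2)"
    using assms by (simp add: J0''_eq field_simps power2_eq_square)
  ultimately show ?thesis by simp
qed

lemma J0_energy_ge:
  assumes "x > 0"
  shows "x * J0 x ^2 \<le> J0_energy x"
proof -
  have "x * J0' x ^2 + J0 x * J0' x + J0 x ^2 / (2 * x)
      = ((x * J0' x + J0 x / 2)^2 + (J0 x)^2/4) / x"
    using assms by (simp add: field_simps power2_eq_square)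
  also have "\<dots> \<ge> 0" using assms by simp
  finally show ?thesis unfolding J0_energy_def by (simp add: algebra_simps)
qed

lemma ex_J0_gt_half: "\<exists>t. 0 < t \<and> t \<le> 1 \<and> (\<forall>s. 0 \<le> s \<and> s \<le> t \<longrightarrow> J0 s > 1/2)"
proof -
  obtain d where d: "d > 0" "\<And>s. dist s 0 < d \<Longrightarrow> dist (J0 s) (J0 0) < 1/2"
    using isCont_J0[of 0] unfolding continuous_at_eps_delta
    by (metis divide_pos_pos zero_less_one zero_less_numeral)
  have "J0 s > 1/2" if "0 \<le> s" "s \<le> min (d/2) 1" for s
    using d(2)[of s] that d(1) by (auto simp: dist_real_def abs_if split: if_splits)
  thus ?thesis using d(1) by (intro exI[of _ "min (d/2) 1"]) auto
qed

definition x0 :: real where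
  "x0 = (SOME t. 0 < t \<and> t \<le> 1 \<and> (\<forall>s. 0 \<le> s \<and> s \<le> t \<longrightarrow> J0 s > 1/2))"

lemma x0_pos: "0 < x0" and x0_le_1: "x0 \<le> 1"
  and J0_gt_half: "0 \<le> s \<Longrightarrow> s \<le> x0 \<Longrightarrow> J0 s > 1/2"
  using someI_ex[OF ex_J0_gt_half] unfolding x0_def[symmetric] by auto

definition energy_max :: real where
  "energy_max = J0_energy x0"

definition energy_min :: real where
  "energy_min = J0_energy x0 * exp (- 1 / (4 * x0^2))"

lemma energy_max_pos: "energy_max > 0"
proof -
  have "0 < x0 * J0 x0 ^2" using J0_gt_half[of x0] x0_pos by simp
  thus ?thesis unfolding energy_max_def using J0_energy_ge[OF x0_pos] by simp
qed

lemma energy_min_pos: "energy_min > 0"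
  using energy_max_pos by (simp add: energy_min_def energy_max_def)

lemma J0_energy_le_max:
  assumes "x0 \<le> x"
  shows "J0_energy x \<le> energy_max"
  unfolding energy_max_def
proof (rule DERIV_nonpos_imp_nonincreasing[OF assms])
  fix t assume "x0 \<le> t"
  hence t: "t > 0" using x0_pos by simp
  have "- (J0 t ^2) / (2 * t^2) \<le> 0" by (simp add: divide_nonpos_pos t)
  thus "\<exists>y. (J0_energy has_real_derivative y) (at t) \<and> y \<le> 0"
    using J0_energy_has_real_derivative[OF t] by blast
qed

lemma J0_energy_exp_has_real_derivative:
  assumes t: "t > 0"
  shows "((\<lambda>t. J0_energy t * exp (- 1 / (4 * t^2))) has_real_derivative
    exp (- 1 / (4 * t^2)) * ((J0_energy t - t * J0 t ^2) / (2 * t^3))) (at t)"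
proof -
  have "((\<lambda>t. - 1 / (4 * t^2)) has_real_derivative 1/(2*t^3)) (at t)"
    using t by (auto intro!: derivative_eq_intros simp: field_simps power2_eq_square power3_eq_cube)
  from DERIV_mult[OF J0_energy_has_real_derivative[OF t] DERIV_fun_exp[OF this]]
  show ?thesis using t by (simp add: field_simps power2_eq_square power3_eq_cube)
qed

lemma J0_energy_ge_min:
  assumes "x0 \<le> x"
  shows "energy_min \<le> J0_energy x"
proof -
  let ?G = "\<lambda>t. J0_energy t * exp (- 1 / (4 * t^2))"
  have "?G x0 \<le> ?G x"
  proof (rule DERIV_nonneg_imp_nondecreasing[OF assms])
    fix t assume "x0 \<le> t"
    hence t: "t > 0" using x0_pos by simp
    have "exp (- 1 / (4 * t^2)) * ((J0_energy t - t * J0 t ^2) / (2 * t^3)) \<ge> 0"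
      using J0_energy_ge[OF t] t by (intro mult_nonneg_nonneg divide_nonneg_pos) auto
    thus "\<exists>y. (?G has_real_derivative y) (at t) \<and> y \<ge> 0"
      using J0_energy_exp_has_real_derivative[OF t] by blast
  qed
  also have "?G x \<le> J0_energy x"
  proof -
    have "J0_energy x \<ge> 0"
      using J0_energy_ge[of x] assms x0_pos by (smt (verit) mult_nonneg_nonneg zero_le_power2)
    thus ?thesis by (simp add: mult_left_le)
  qed
  finally show ?thesis unfolding energy_min_def .
qed

lemma J0_sq_le_energy_max:
  assumes "x0 \<le> x"
  shows "J0 x ^2 \<le> energy_max / x"
proof -
  have "x > 0" using assms x0_pos by simp
  moreover have "x * J0 x ^2 \<le> energy_max"
    using J0_energy_ge[OF \<open>x > 0\<close>] J0_energy_le_max[OF assms] by simp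
  ultimately show ?thesis by (simp add: field_simps)
qed

section \<open>Separation and density of the zeros\<close>

definition J0_zeros :: "real set" where
  "J0_zeros = {x. 0 < x \<and> J0 x = 0}"

lemma J0_zeros_pos: "z \<in> J0_zeros \<Longrightarrow> 0 < z"
  by (simp add: J0_zeros_def)

lemma x0_less_J0_zero: "z \<in> J0_zeros \<Longrightarrow> x0 < z"
  using J0_gt_half[of z] by (force simp: J0_zeros_def)

lemma J0'_sq_at_zero_bounds:
  assumes "z \<in> J0_zeros"
  shows "energy_min \<le> z * J0' z ^2" "z * J0' z ^2 \<le> energy_max"
proof -
  have "J0_energy z = z * J0' z ^2" using assms by (simp add: J0_zeros_def J0_energy_def)
  thus "energy_min \<le> z * J0' z ^2" "z * J0' z ^2 \<le> energy_max"
    using J0_energy_ge_min J0_energy_le_max x0_less_J0_zero[OF assms] by (metis less_imp_le)+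
qed

definition J0''_bound :: real where
  "J0''_bound = 2 / x0 + 2 * energy_max"

lemma J0''_sq_le:
  assumes "x0 \<le> x"
  shows "J0'' x ^2 \<le> J0''_bound / x"
proof -
  have x: "x > 0" using assms x0_pos by simp
  have "J0'' x ^2 = (J0' x / x + J0 x)^2" using x by (simp add: J0''_eq power2_commute add.commute)
  also have "\<dots> \<le> 2 * (J0' x / x)^2 + 2 * J0 x ^2"
    using zero_le_power2[of "J0' x / x - J0 x"] unfolding power2_eq_square by argo
  also have "(J0' x / x)^2 \<le> 1 / (x0 * x)"
  proof -
    have "(J0' x / x)^2 \<le> 1 / x^2"
      using abs_J0'_le_1[of x] x abs_square_le_1[of "J0' x"]
      by (simp add: power_divide divide_right_mono)
    also have "1 / x^2 \<le> 1 / (x0 * x)"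
      using x assms x0_pos by (intro divide_left_mono) (auto simp: power2_eq_square intro: mult_right_mono)
    finally show ?thesis .
  qed
  also have "J0 x ^2 \<le> energy_max / x" using J0_sq_le_energy_max[OF assms] .
  finally show ?thesis unfolding J0''_bound_def using x x0_pos by (simp add: field_simps)
qed

definition zero_gap :: real where
  "zero_gap = sqrt (energy_min / J0''_bound)"

lemma zero_gap_pos: "zero_gap > 0"
  using energy_min_pos energy_max_pos x0_pos by (simp add: zero_gap_def J0''_bound_def add_pos_pos)

text \<open>Between zeros \<open>a < b\<close> there is a critical point \<open>c\<close>; the mean value theorem applied to \<open>J\<^sub>0'\<close>
  on \<open>[a, c]\<close> and the bound on \<open>J\<^sub>0''\<close> turn the lower bound on \<open>a J\<^sub>0'(a)\<^sup>2\<close> into a lower bound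
  on \<open>c - a\<close>.\<close>
lemma J0_zeros_gap:
  assumes a: "a \<in> J0_zeros" and b: "b \<in> J0_zeros" and ab: "a < b"
  shows "zero_gap \<le> b - a"
proof -
  have ax: "x0 < a" using x0_less_J0_zero[OF a] .
  have a0: "a > 0" using ax x0_pos by simp
  have K0: "J0''_bound > 0" using energy_max_pos x0_pos by (simp add: J0''_bound_def add_pos_pos)
  obtain c where c: "a < c" "c < b" "DERIV J0 c :> 0"
    using Rolle[OF ab _ continuous_on_J0] a b J0_has_real_derivative
    by (auto simp: J0_zeros_def real_differentiable_def)
  have "J0' c = 0" using DERIV_unique[OF J0_has_real_derivative c(3)] .
  moreover obtain \<xi> where \<xi>: "a < \<xi>" "\<xi> < c" "J0' c - J0' a = (c - a) * J0'' \<xi>"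
    using MVT2[OF c(1), of J0' J0''] J0'_has_real_derivative by blast
  ultimately have "J0' a = - ((c - a) * J0'' \<xi>)" by simp
  hence "a * J0' a ^2 = a * (c - a)^2 * J0'' \<xi> ^2" by (simp add: power_mult_distrib)
  also have "\<dots> \<le> a * (c - a)^2 * (J0''_bound / a)"
  proof -
    have "J0'' \<xi> ^2 \<le> J0''_bound / \<xi>" using J0''_sq_le \<xi> ax by simp
    also have "\<dots> \<le> J0''_bound / a" using K0 \<xi> a0 by (intro divide_left_mono) auto
    finally show ?thesis using a0 by (intro mult_left_mono) auto
  qed
  also have "\<dots> = (c - a)^2 * J0''_bound" using a0 by simp
  finally have "a * J0' a ^2 \<le> (c - a)^2 * J0''_bound" .
  hence "energy_min / J0''_bound \<le> (c - a)^2"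
    using J0'_sq_at_zero_bounds(1)[OF a] K0 by (simp add: field_simps)
  from real_sqrt_le_mono[OF this] have "zero_gap \<le> c - a"
    unfolding zero_gap_def using c by simp
  thus ?thesis using c by simp
qed

lemma J0_zeros_separated:
  "a \<in> J0_zeros \<Longrightarrow> b \<in> J0_zeros \<Longrightarrow> a \<noteq> b \<Longrightarrow> zero_gap \<le> \<bar>b - a\<bar>"
  using J0_zeros_gap[of a b] J0_zeros_gap[of b a] by (cases a b rule: linorder_cases) auto

lemma card_separated_le:
  fixes A :: "real set"
  assumes d: "d > 0" and sep: "\<And>x y. x \<in> A \<Longrightarrow> y \<in> A \<Longrightarrow> x \<noteq> y \<Longrightarrow> d \<le> \<bar>y - x\<bar>"
    and A: "A \<subseteq> {m..m + L}" and L: "0 \<le> L"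
  shows "finite A" "card A \<le> nat \<lfloor>L / d\<rfloor> + 1"
proof -
  define f where "f x = \<lfloor>(x - m) / d\<rfloor>" for x
  have "inj_on f A"
  proof (rule inj_onI, rule ccontr)
    fix x y assume xy: "x \<in> A" "y \<in> A" "f x = f y" "x \<noteq> y"
    have "\<bar>(y - m) / d - (x - m) / d\<bar> < 1"
      using xy(3) unfolding f_def by linarith
    hence "\<bar>y - x\<bar> < d" using d by (simp add: field_simps)
    thus False using sep[OF xy(1,2,4)] by simp
  qed
  moreover have img: "f ` A \<subseteq> {0..\<lfloor>L / d\<rfloor>}"
  proof
    fix k assume "k \<in> f ` A"
    then obtain x where x: "x \<in> A" "k = f x" by blast
    hence "m \<le> x" "x - m \<le> L" using A by auto
    hence "0 \<le> (x - m) / d" "(x - m) / d \<le> L / d" using d by (auto intro: divide_right_mono)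
    thus "k \<in> {0..\<lfloor>L / d\<rfloor>}" unfolding x f_def by (auto intro: floor_mono)
  qed
  ultimately show "finite A" using inj_on_finite by blast
  have "card A = card (f ` A)" using card_image[OF \<open>inj_on f A\<close>] by simp
  also have "\<dots> \<le> card {0..\<lfloor>L / d\<rfloor>}" using img by (intro card_mono) auto
  also have "\<dots> = nat \<lfloor>L / d\<rfloor> + 1" using L d by (simp add: nat_add_distrib)
  finally show "card A \<le> nat \<lfloor>L / d\<rfloor> + 1" .
qed

lemma finite_J0_zeros_le: "finite {y \<in> J0_zeros. y \<le> X}"
proof (rule card_separated_le(1)[OF zero_gap_pos])
  show "{y \<in> J0_zeros. y \<le> X} \<subseteq> {0..0 + max 0 X}" using J0_zeros_pos by fastforce
qed (auto simp: J0_zeros_separated)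

lemma finite_J0_zeros_less: "finite {y \<in> J0_zeros. y < x}"
  by (rule finite_subset[OF _ finite_J0_zeros_le[of x]]) auto

text \<open>Sturm comparison of \<open>J\<^sub>0\<close> with \<open>sin (t - a)\<close>: \<open>W\<^sub>a(t)\<close> is the Wronskian of \<open>\<surd>t J\<^sub>0(t)\<close>, which
  solves \<open>u'' + (1 + 1/(4t\<^sup>2)) u = 0\<close>, and \<open>sin (t - a)\<close>.\<close>
definition sturm_W :: "real \<Rightarrow> real \<Rightarrow> real" where
  "sturm_W a t = sqrt t * (J0' t * sin (t - a) - J0 t * cos (t - a))
     + J0 t * sin (t - a) / (2 * sqrt t)"

lemma sturm_W_has_real_derivative:
  assumes t: "t > 0"
  shows "(sturm_W a has_real_derivative (- J0 t * sin (t - a) / (4 * t * sqrt t))) (at t)"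
proof -
  have s: "sqrt t > 0" and ss: "sqrt t * sqrt t = t" using t by simp_all
  have alg: "(s * ((d2 * S + d1 * C) - (d1 * C - y * S)) + (inverse s / 2) * (d1 * S - y * C))
      + ((d1 * S + y * C) * (2 * s) - (y * S) * (2 * (inverse s / 2))) / ((2 * s) * (2 * s))
      = - y * S / (4 * (s * s) * s)"
    if "s > 0" "d2 = (- d1) / (s * s) - y" for s y d1 d2 S C :: real
    using that(1) unfolding that(2) by (simp add: field_simps)
  have deriv: "(sturm_W a has_real_derivative
      (sqrt t * ((J0'' t * sin (t - a) + J0' t * cos (t - a)) - (J0' t * cos (t - a) - J0 t * sin (t - a)))
      + (inverse (sqrt t) / 2) * (J0' t * sin (t - a) - J0 t * cos (t - a)))
      + ((J0' t * sin (t - a) + J0 t * cos (t - a)) * (2 * sqrt t)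
         - (J0 t * sin (t - a)) * (2 * (inverse (sqrt t) / 2))) / ((2 * sqrt t) * (2 * sqrt t))) (at t)"
  proof -
    have sin: "((\<lambda>t. sin (t - a)) has_real_derivative cos (t - a)) (at t)"
      and cos: "((\<lambda>t. cos (t - a)) has_real_derivative - sin (t - a)) (at t)"
      by (auto intro!: derivative_eq_intros)
    have "((\<lambda>t. J0' t * sin (t - a) - J0 t * cos (t - a)) has_real_derivative
        (J0'' t * sin (t - a) + J0' t * cos (t - a)) - (J0' t * cos (t - a) - J0 t * sin (t - a))) (at t)"
      using DERIV_diff[OF DERIV_mult[OF J0'_has_real_derivative sin] DERIV_mult[OF J0_has_real_derivative cos]]
      by (simp add: algebra_simps)
    moreover have "((\<lambda>t. J0 t * sin (t - a)) has_real_derivative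
        J0' t * sin (t - a) + J0 t * cos (t - a)) (at t)"
      using DERIV_mult[OF J0_has_real_derivative sin] by (simp add: algebra_simps)
    moreover have "((\<lambda>t. 2 * sqrt t) has_real_derivative 2 * (inverse (sqrt t) / 2)) (at t)"
      using DERIV_cmult[OF DERIV_real_sqrt[OF t], of 2] by simp
    ultimately show ?thesis
      unfolding sturm_W_def using s
      by (intro DERIV_add DERIV_mult' DERIV_divide DERIV_real_sqrt t) auto
  qed
  have J0'': "J0'' t = - J0' t / (sqrt t * sqrt t) - J0 t" unfolding ss using t by (simp add: J0''_eq)
  from deriv show ?thesis unfolding alg[OF s J0''] ss .
qed

lemma J0_zero_within_pi:
  assumes a0: "0 < a"
  shows "\<exists>z\<in>J0_zeros. a \<le> z \<and> z \<le> a + pi"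
proof (rule ccontr)
  assume "\<not> ?thesis"
  hence nz: "\<And>z. a \<le> z \<Longrightarrow> z \<le> a + pi \<Longrightarrow> J0 z \<noteq> 0" using a0 by (auto simp: J0_zeros_def)
  have api: "a \<le> a + pi" using pi_gt_zero by linarith
  have sin: "sin (t - a) \<ge> 0" if "a \<le> t" "t \<le> a + pi" for t
    using that by (intro sin_ge_zero) auto
  obtain s where s: "\<bar>s\<bar> = 1" "s * J0 a > 0" using nz[of a] api
    by (cases "J0 a > 0") (auto intro: that[of 1] that[of "-1"])
  have sign: "s * J0 t > 0" if t: "a \<le> t" "t \<le> a + pi" for t
  proof (rule ccontr)
    assume "\<not> s * J0 t > 0"
    moreover have "continuous_on {a..t} (\<lambda>t. s * J0 t)" by (intro continuous_intros continuous_on_J0)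
    ultimately obtain x where "a \<le> x" "x \<le> t" "s * J0 x = 0"
      using IVT2'[of "\<lambda>t. s * J0 t" t 0 a] s t by force
    thus False using nz[of x] s t by simp
  qed
  have "s * sturm_W a (a + pi) \<le> s * sturm_W a a"
  proof (rule DERIV_nonpos_imp_nonincreasing[OF api])
    fix t assume t: "a \<le> t" "t \<le> a + pi"
    have "s * (- J0 t * sin (t - a) / (4 * t * sqrt t)) = - (s * J0 t * sin (t - a)) / (4 * t * sqrt t)"
      by simp
    also have "\<dots> \<le> 0"
      using sign[OF t] sin[OF t] t a0 by (intro divide_nonpos_pos) auto
    finally show "\<exists>y. ((\<lambda>t. s * sturm_W a t) has_real_derivative y) (at t) \<and> y \<le> 0"
      using DERIV_cmult[OF sturm_W_has_real_derivative[of t a], of s] t a0 by auto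
  qed
  moreover have "sturm_W a a = - sqrt a * J0 a" "sturm_W a (a + pi) = sqrt (a + pi) * J0 (a + pi)"
    by (simp_all add: sturm_W_def)
  ultimately have "sqrt (a + pi) * (s * J0 (a + pi)) + sqrt a * (s * J0 a) \<le> 0"
    by (simp add: algebra_simps)
  moreover have "0 < sqrt (a + pi) * (s * J0 (a + pi))"
    using sign[OF api order.refl] a0 pi_gt_zero by (metis mult_pos_pos real_sqrt_gt_zero add_pos_pos)
  moreover have "0 < sqrt a * (s * J0 a)" using s a0 by simp
  ultimately show False by simp
qed

lemma card_J0_zeros_less_strict_mono:
  assumes "x \<in> J0_zeros" "x' \<in> J0_zeros" "x < x'"
  shows "card {y \<in> J0_zeros. y < x} < card {y \<in> J0_zeros. y < x'}"
  by (rule psubset_card_mono[OF finite_J0_zeros_less]) (use assms in auto)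

lemma next_J0_zero:
  assumes "0 \<le> x"
  shows "\<exists>x'\<in>J0_zeros. x < x' \<and> (\<forall>y\<in>J0_zeros. y < x' \<longrightarrow> y \<le> x)"
proof -
  define S where "S = {y \<in> J0_zeros. x < y \<and> y \<le> x + 1 + pi}"
  obtain z where "z \<in> J0_zeros" "x + 1 \<le> z" "z \<le> x + 1 + pi"
    using J0_zero_within_pi[of "x + 1"] assms by auto
  hence z: "z \<in> S" unfolding S_def by auto
  have fin: "finite S" by (rule finite_subset[OF _ finite_J0_zeros_le]) (auto simp: S_def)
  have "Min S \<in> J0_zeros" "x < Min S" using Min_in[OF fin] z unfolding S_def by blast+
  moreover have "y \<le> x" if "y \<in> J0_zeros" "y < Min S" for y
    using Min_le[OF fin, of y] Min_le[OF fin z] that z unfolding S_def by force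
  ultimately show ?thesis by blast
qed

lemma ex_J0_zero_card_less: "\<exists>x\<in>J0_zeros. card {y \<in> J0_zeros. y < x} = k"
proof (induction k)
  case 0
  obtain x where "x \<in> J0_zeros" "\<forall>y\<in>J0_zeros. y < x \<longrightarrow> y \<le> 0"
    using next_J0_zero[of 0] by auto
  moreover from this have "{y \<in> J0_zeros. y < x} = {}" using J0_zeros_pos by fastforce
  ultimately show ?case by (metis card.empty)
next
  case (Suc k)
  then obtain x where x: "x \<in> J0_zeros" "card {y \<in> J0_zeros. y < x} = k" by blast
  obtain x' where x': "x' \<in> J0_zeros" "x < x'" "\<forall>y\<in>J0_zeros. y < x' \<longrightarrow> y \<le> x"
    using next_J0_zero[of x] J0_zeros_pos[OF x(1)] by auto
  have "{y \<in> J0_zeros. y < x'} = insert x {y \<in> J0_zeros. y < x}" using x x' by force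
  hence "card {y \<in> J0_zeros. y < x'} = Suc k" using x finite_J0_zeros_less by simp
  thus ?case using x' by blast
qed

lemma bessel_zero_spec:
  "bessel_zero n \<in> J0_zeros \<and> card {y \<in> J0_zeros. y < bessel_zero n} = n - 1"
proof -
  have "{y. 0 < y \<and> y < x \<and> J0 y = 0} = {y \<in> J0_zeros. y < x}" for x
    by (auto simp: J0_zeros_def)
  hence "(0 < x \<and> J0 x = 0 \<and> card {y. 0 < y \<and> y < x \<and> J0 y = 0} = n - 1)
      \<longleftrightarrow> (x \<in> J0_zeros \<and> card {y \<in> J0_zeros. y < x} = n - 1)" for x
    by (simp add: J0_zeros_def)
  hence bessel_zero: "bessel_zero n = (THE x. x \<in> J0_zeros \<and> card {y \<in> J0_zeros. y < x} = n - 1)"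
    unfolding bessel_zero_def by presburger
  have "\<exists>!x. x \<in> J0_zeros \<and> card {y \<in> J0_zeros. y < x} = n - 1"
  proof (rule ex_ex1I)
    show "\<exists>x. x \<in> J0_zeros \<and> card {y \<in> J0_zeros. y < x} = n - 1"
      using ex_J0_zero_card_less by blast
    fix x x' assume "x \<in> J0_zeros \<and> card {y \<in> J0_zeros. y < x} = n - 1"
      "x' \<in> J0_zeros \<and> card {y \<in> J0_zeros. y < x'} = n - 1"
    thus "x = x'"
      using card_J0_zeros_less_strict_mono[of x x'] card_J0_zeros_less_strict_mono[of x' x]
      by (cases x x' rule: linorder_cases) auto
  qed
  from theI'[OF this] show ?thesis unfolding bessel_zero .
qed

lemma bessel_zero_in_J0_zeros: "bessel_zero n \<in> J0_zeros"
  using bessel_zero_spec by blast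

lemma bessel_zero_pos: "bessel_zero n > 0"
  using J0_zeros_pos[OF bessel_zero_in_J0_zeros] .

lemma bessel_zero_inj: "1 \<le> n \<Longrightarrow> 1 \<le> m \<Longrightarrow> bessel_zero n = bessel_zero m \<Longrightarrow> n = m"
  using bessel_zero_spec[of n] bessel_zero_spec[of m] by simp

lemma card_J0_zeros_below_ge: "n \<le> card {y \<in> J0_zeros. y \<le> real n * (pi + 1)}"
proof -
  have "\<exists>z. z \<in> J0_zeros \<and> 1 + real j * (pi + 1) \<le> z \<and> z \<le> 1 + real j * (pi + 1) + pi" for j
    using J0_zero_within_pi[of "1 + real j * (pi + 1)"] pi_gt_zero by (force simp: add_pos_nonneg)
  then obtain g where g: "\<And>j. g j \<in> J0_zeros"
    "\<And>j. 1 + real j * (pi + 1) \<le> g j" "\<And>j. g j \<le> 1 + real j * (pi + 1) + pi"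
    by metis
  have "strict_mono g"
  proof (rule strict_monoI)
    fix i j :: nat assume "i < j"
    hence "(real i + 1) * (pi + 1) \<le> real j * (pi + 1)"
      using pi_gt_zero by (intro mult_right_mono) auto
    thus "g i < g j" using g(2)[of j] g(3)[of i] by (simp add: algebra_simps)
  qed
  hence "card (g ` {..<n}) = n" by (simp add: card_image strict_mono_imp_inj_on)
  moreover have "g ` {..<n} \<subseteq> {y \<in> J0_zeros. y \<le> real n * (pi + 1)}"
  proof -
    have "g j \<le> real n * (pi + 1)" if "j < n" for j
    proof -
      have "(real j + 1) * (pi + 1) \<le> real n * (pi + 1)"
        using that pi_gt_zero by (intro mult_right_mono) auto
      thus ?thesis using g(3)[of j] by (simp add: algebra_simps)
    qed
    thus ?thesis using g(1) by auto
  qed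
  ultimately show ?thesis using card_mono[OF finite_J0_zeros_le] by metis
qed

lemma bessel_zero_le:
  assumes "1 \<le> n"
  shows "bessel_zero n \<le> real n * (pi + 1)"
proof (rule ccontr)
  assume "\<not> ?thesis"
  hence "{y \<in> J0_zeros. y \<le> real n * (pi + 1)} \<subseteq> {y \<in> J0_zeros. y < bessel_zero n}" by auto
  hence "card {y \<in> J0_zeros. y \<le> real n * (pi + 1)} \<le> card {y \<in> J0_zeros. y < bessel_zero n}"
    by (intro card_mono finite_J0_zeros_less)
  thus False using card_J0_zeros_below_ge[of n] bessel_zero_spec[of n] assms by linarith
qed

section \<open>Counting lattice points near the curve\<close>

lemma powr_diff_ge:
  fixes c s t p :: real
  assumes c: "0 < c" "c \<le> 1" and s: "c \<le> s" "s \<le> t" and p: "1 \<le> p" "p \<le> 2"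
  shows "c * (t - s) \<le> t powr p - s powr p"
proof -
  have s0: "s > 0" and t0: "t > 0" using s c by auto
  have "t * s powr (p - 1) \<le> t * t powr (p - 1)"
    using p s s0 t0 by (intro mult_left_mono powr_mono2) auto
  hence "(t - s) * s powr (p - 1) \<le> t powr p - s powr p"
    using s0 t0 by (simp add: algebra_simps powr_mult_base)
  moreover have "c \<le> s powr (p - 1)"
  proof (cases "1 \<le> s")
    case True
    thus ?thesis using p c ge_one_powr_ge_zero[of s "p - 1"] by linarith
  next
    case False
    hence "s powr 1 \<le> s powr (p - 1)" using p s0 by (intro powr_mono') auto
    thus ?thesis using s0 s by simp
  qed
  hence "c * (t - s) \<le> s powr (p - 1) * (t - s)" using s by (intro mult_right_mono) auto
  ultimately show ?thesis by (simp add: mult.commute)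
qed

definition window_bound :: nat where
  "window_bound = nat \<lfloor>(2 / x0) / zero_gap\<rfloor> + 1"

text \<open>Since \<open>p \<ge> 1\<close> and zeros exceed \<open>x\<^sub>0\<close>, a unit window for \<open>z\<^sup>p\<close> confines \<open>z\<close> to an interval
  of length \<open>2/x\<^sub>0\<close>, which holds at most \<open>window_bound\<close> separated zeros.\<close>
lemma card_bessel_zero_window_le:
  assumes B: "\<And>n. n \<in> B \<Longrightarrow> 1 \<le> n" "\<And>n. n \<in> B \<Longrightarrow> \<bar>bessel_zero n powr p - c\<bar> \<le> 1/2"
    and p: "1 \<le> p" "p \<le> 2"
  shows "card B \<le> window_bound"
proof (cases "B = {}")
  case False
  define A where "A = bessel_zero ` B"
  have inj: "inj_on bessel_zero B" using bessel_zero_inj B(1) by (meson inj_onI)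
  have AZ: "A \<subseteq> J0_zeros" unfolding A_def using bessel_zero_in_J0_zeros by blast
  obtain m where mA: "m \<in> A" using False unfolding A_def by blast
  have window: "A \<subseteq> {m - 1 / x0..m - 1 / x0 + 2 / x0}"
  proof
    fix t assume tA: "t \<in> A"
    have "\<bar>t powr p - c\<bar> \<le> 1/2" "\<bar>m powr p - c\<bar> \<le> 1/2"
      using tA mA B(2) unfolding A_def by auto
    hence "\<bar>t powr p - m powr p\<bar> \<le> 1" by linarith
    moreover have "x0 * \<bar>t - m\<bar> \<le> \<bar>t powr p - m powr p\<bar>"
      using powr_diff_ge[OF x0_pos x0_le_1 _ _ p, of m t] powr_diff_ge[OF x0_pos x0_le_1 _ _ p, of t m]
        x0_less_J0_zero AZ tA mA
      by (cases "m \<le> t") (auto simp: less_imp_le subset_iff)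
    ultimately have "\<bar>t - m\<bar> \<le> 1 / x0" using x0_pos by (simp add: field_simps)
    thus "t \<in> {m - 1 / x0..m - 1 / x0 + 2 / x0}" by auto
  qed
  have "card A \<le> nat \<lfloor>(2 / x0) / zero_gap\<rfloor> + 1"
    by (rule card_separated_le(2)[OF zero_gap_pos _ window])
      (use AZ x0_pos in \<open>auto intro: J0_zeros_separated\<close>)
  moreover have "card A = card B" unfolding A_def using card_image[OF inj] .
  ultimately show ?thesis unfolding window_bound_def by simp
qed simp

lemma card_Lambda_le:
  assumes "1 / 2 \<le> \<alpha>" "\<alpha> < 1" "1 \<le> N2"
  shows "card (Lambda \<alpha> N1 N2 \<tau>) \<le> window_bound * N2"
proof -
  define F where "F n2 = {n1. sim n1 N1 \<and>
     \<bar>bessel_zero n1 powr (2 * \<alpha>) + bessel_zero n2 powr (2 * \<alpha>) - real \<tau>\<bar> \<le> 1 / 2}" for n2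
  have finF: "finite (F n2)" for n2
    by (rule finite_subset[of _ "{..<2*N1}"]) (auto simp: F_def sim_def)
  have "card (F n2) \<le> window_bound" for n2
  proof (rule card_bessel_zero_window_le)
    show "n \<in> F n2 \<Longrightarrow> 1 \<le> n" for n using assms by (auto simp: F_def sim_def)
    show "n \<in> F n2 \<Longrightarrow>
        \<bar>bessel_zero n powr (2 * \<alpha>) - (real \<tau> - bessel_zero n2 powr (2 * \<alpha>))\<bar> \<le> 1/2" for n
      by (auto simp: F_def algebra_simps)
  qed (use assms in auto)
  moreover have "Lambda \<alpha> N1 N2 \<tau> \<subseteq> (\<Union>n2\<in>{N2..<2*N2}. (\<lambda>n1. (n1, n2)) ` F n2)"
    unfolding Lambda_def F_def by (auto simp: sim_def)
  hence "card (Lambda \<alpha> N1 N2 \<tau>) \<le> (\<Sum>n2\<in>{N2..<2*N2}. card ((\<lambda>n1. (n1, n2)) ` F n2))"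
    by (intro order.trans[OF card_mono card_UN_le]) (auto intro: finF)
  ultimately show ?thesis
    using sum_mono[of "{N2..<2*N2}" "\<lambda>n2. card ((\<lambda>n1. (n1, n2)) ` F n2)" "\<lambda>_. window_bound"]
      card_image_le[OF finF] by (fastforce intro: order.trans)
qed

section \<open>Radial integrals over the disk\<close>

definition radius_distr :: "real measure" where
  "radius_distr = distr (restrict_space lborel Theta) borel (\<lambda>x::real^2. norm x)"

definition radius_density :: "real measure" where
  "radius_density = density lborel (\<lambda>r. ennreal (2 * pi * r * indicator {0..1} r))"

definition radius_tail :: "real \<Rightarrow> real" where
  "radius_tail x = (if x < 0 then pi else if x < 1 then pi - pi * x^2 else 0)"

lemma sets_borel_Theta [measurable]: "Theta \<in> sets borel"
  unfolding Theta_def by simp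

lemma norm_measurable_restrict_Theta [measurable]:
  "(\<lambda>y::real^2. norm y) \<in> borel_measurable (restrict_space lborel Theta)"
  by (intro measurable_restrict_space1) simp

lemma emeasure_radius_distr_greaterThan: "emeasure radius_distr {x<..} = ennreal (radius_tail x)"
proof -
  have ball: "emeasure lborel (ball (0::real^2) r) = ennreal (pi * r^2)"
    and cball: "emeasure lborel (cball (0::real^2) r) = ennreal (pi * r^2)" if "r \<ge> 0" for r
    using emeasure_ball[of r "0::real^2"] emeasure_cball[of r "0::real^2"] that
    by (simp_all add: unit_ball_vol_2)
  have "emeasure radius_distr {x<..} = emeasure (restrict_space lborel Theta)
      ((\<lambda>y::real^2. norm y) -` {x<..} \<inter> space (restrict_space lborel Theta))"
    unfolding radius_distr_def by (subst emeasure_distr) auto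
  also have "\<dots> = emeasure lborel (Theta \<inter> {y. x < norm y})"
    by (subst emeasure_restrict_space) (auto intro!: arg_cong[where f="emeasure lborel"])
  also have "\<dots> = ennreal (radius_tail x)"
  proof (cases "x < 0")
    case True
    hence "Theta \<inter> {y. x < norm y} = ball 0 1"
      unfolding Theta_def using norm_ge_zero by (auto simp: dist_norm intro: less_le_trans)
    thus ?thesis using True ball[of 1] by (simp add: radius_tail_def)
  next
    case False
    show ?thesis
    proof (cases "x < 1")
      case True
      have "Theta \<inter> {y. x < norm y} = ball 0 1 - cball 0 x"
        unfolding Theta_def by (auto simp: dist_norm)
      moreover have "emeasure lborel (ball (0::real^2) 1 - cball 0 x)
          = emeasure lborel (ball (0::real^2) 1) - emeasure lborel (cball (0::real^2) x)"
        using emeasure_Diff[of lborel "cball (0::real^2) x" "ball 0 1"] True False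
          emeasure_lborel_cball_finite[of "0::real^2" x]
        by (auto simp: subset_iff)
      moreover have "ennreal (pi * 1^2) - ennreal (pi * x^2) = ennreal (pi - pi * x^2)"
        using True False by (subst ennreal_minus) (auto intro: mult_left_mono simp: power_le_one)
      ultimately show ?thesis
        using True False ball[of 1] cball[of x] by (simp add: radius_tail_def)
    next
      case False2: False
      hence "Theta \<inter> {y. x < norm y} = {}" unfolding Theta_def by (auto simp: dist_norm)
      thus ?thesis using False False2 by (simp add: radius_tail_def)
    qed
  qed
  finally show ?thesis .
qed

lemma emeasure_radius_density_greaterThan:
  "emeasure radius_density {x<..} = ennreal (radius_tail x)"
proof -
  have "emeasure radius_density {x<..}
      = (\<integral>\<^sup>+ r. ennreal (2 * pi * r * indicator {0..1} r) * indicator {x<..} r \<partial>lborel)"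
    unfolding radius_density_def by (subst emeasure_density) auto
  also have "\<dots> = ennreal (radius_tail x)"
  proof (cases "x < 1")
    case True
    define c where "c = max 0 x"
    have c: "0 \<le> c" "c \<le> 1" using True unfolding c_def by auto
    have "(\<integral>\<^sup>+ r. ennreal (2 * pi * r * indicator {0..1} r) * indicator {x<..} r \<partial>lborel)
        = (\<integral>\<^sup>+ r. ennreal (2 * pi * r) * indicator {c..1} r \<partial>lborel)"
      using AE_lborel_singleton[of x]
      by (intro nn_integral_cong_AE, eventually_elim) (auto simp: c_def indicator_def)
    also have "\<dots> = ennreal (pi * 1^2 - pi * c^2)"
    proof (rule nn_integral_FTC_Icc)
      show "((\<lambda>r. pi * r^2) has_real_derivative 2 * pi * r) (at r)" for r
        by (auto intro!: derivative_eq_intros)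
    qed (use c in auto)
    also have "pi * 1^2 - pi * c^2 = radius_tail x"
      unfolding radius_tail_def c_def using True by auto
    finally show ?thesis .
  next
    case False
    hence "(\<lambda>r. ennreal (2 * pi * r * indicator {0..1} r) * indicator {x<..} r) = (\<lambda>r. 0)"
      by (auto simp: indicator_def fun_eq_iff)
    thus ?thesis using False by (simp add: radius_tail_def)
  qed
  finally show ?thesis .
qed

lemma radius_distr_eq_density: "radius_distr = radius_density"
proof (rule measure_eqI_lessThan)
  show "emeasure radius_distr {x<..} < \<infinity>" for x
    using emeasure_radius_distr_greaterThan by simp
  show "emeasure radius_distr {x<..} = emeasure radius_density {x<..}" for x
    using emeasure_radius_distr_greaterThan emeasure_radius_density_greaterThan by simp
qed (simp_all add: radius_distr_def radius_density_def)

lemma integral_Theta_radial: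
  fixes g :: "real \<Rightarrow> real"
  assumes [measurable]: "g \<in> borel_measurable borel"
  shows "(LINT y : Theta | lborel. g (norm y)) = (LINT r | lborel. indicator {0..1} r * (2 * pi * r * g r))"
proof -
  have "(LINT y : Theta | lborel. g (norm y)) = (LINT y | restrict_space lborel Theta. g (norm y))"
    unfolding set_lebesgue_integral_def by (subst integral_restrict_space) auto
  also have "\<dots> = (LINT r | radius_distr. g r)"
    unfolding radius_distr_def by (subst integral_distr) auto
  also have "\<dots> = (LINT r | lborel. (2 * pi * r * indicator {0..1} r) * g r)"
    unfolding radius_distr_eq_density radius_density_def
    by (subst integral_density) (auto simp: indicator_def)
  finally show ?thesis by (simp add: mult_ac)
qed

section \<open>Norms of products of eigenfunctions\<close>

lemma J0_sq_radial_primitive: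
  "((\<lambda>r. pi * r^2 * (J0' (a * r) ^2 + J0 (a * r) ^2)) has_real_derivative
    2 * pi * r * J0 (a * r) ^2) (at r)"
proof -
  have "2 * r * pi * (J0' (a * r)^2 + J0 (a * r)^2)
      + (2 * (J0'' (a * r) * a * J0' (a * r)) + 2 * (J0' (a * r) * a * J0 (a * r))) * (pi * r^2)
      - 2 * pi * r * J0 (a * r)^2
    = 2 * r * pi * J0' (a * r) * ((a * r) * J0'' (a * r) + J0' (a * r) + (a * r) * J0 (a * r))"
    by (simp add: algebra_simps power2_eq_square)
  also have "\<dots> = 0" by (simp add: J0_bessel_ode)
  finally show ?thesis
    by (auto intro!: derivative_eq_intros simp: algebra_simps)
qed

lemma L2sq_J0_radial: "L2sq (\<lambda>y. J0 (a * norm y)) = pi * (J0' a ^2 + J0 a ^2)"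
proof -
  have "L2sq (\<lambda>y. J0 (a * norm y))
      = (LINT r | lborel. indicator {0..1} r *\<^sub>R (2 * pi * r * (J0 (a * r))^2))"
    unfolding L2sq_def using integral_Theta_radial[of "\<lambda>r. (J0 (a * r))^2"] by simp
  also have "\<dots> = pi * 1^2 * (J0' (a * 1) ^2 + J0 (a * 1) ^2) - pi * 0^2 * (J0' (a * 0) ^2 + J0 (a * 0) ^2)"
  proof (rule integral_FTC_atLeastAtMost)
    show "((\<lambda>r. pi * r^2 * (J0' (a * r) ^2 + J0 (a * r) ^2)) has_vector_derivative
        2 * pi * x * (J0 (a * x))^2) (at x within {0..1})" for x
      using J0_sq_radial_primitive[of a x]
      by (simp add: has_real_derivative_iff_has_vector_derivative has_vector_derivative_at_within)
    show "continuous_on {0..1} (\<lambda>r. 2 * pi * r * (J0 (a * r))^2)"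
      by (intro continuous_intros)
  qed simp
  finally show ?thesis by simp
qed

lemma L2sq_J0_radial_at_zero_ge:
  assumes "a \<in> J0_zeros"
  shows "pi * energy_min / a \<le> L2sq (\<lambda>y. J0 (a * norm y))"
proof -
  have a: "a > 0" "J0 a = 0" using assms by (auto simp: J0_zeros_def)
  have "energy_min / a \<le> J0' a ^2"
    using J0'_sq_at_zero_bounds(1)[OF assms] a by (simp add: field_simps)
  hence "pi * (energy_min / a) \<le> pi * J0' a ^2" by (intro mult_left_mono) auto
  thus ?thesis using L2sq_J0_radial[of a] a by simp
qed

definition J0_decay_const :: real where
  "J0_decay_const = max 2 (energy_max * (1 + 1 / x0))"

lemma J0_sq_le_decay:
  assumes t: "0 \<le> t"
  shows "J0 t ^2 \<le> J0_decay_const / (1 + t)"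
proof (cases "t \<le> x0")
  case True
  have "J0 t ^2 \<le> 1" using abs_J0_le_1[OF t] by (simp add: abs_square_le_1)
  also have "1 \<le> 2 / (1 + t)" using True x0_le_1 t by (simp add: field_simps)
  also have "2 / (1 + t) \<le> J0_decay_const / (1 + t)"
    unfolding J0_decay_const_def using t by (intro divide_right_mono) auto
  finally show ?thesis .
next
  case False
  hence tx: "x0 \<le> t" "t > 0" using x0_pos by auto
  have "J0 t ^2 \<le> energy_max / t" using J0_sq_le_energy_max tx by simp
  also have "\<dots> = energy_max * (1 + 1 / t) / (1 + t)"
  proof -
    have "1 + 1 / t = (1 + t) / t" using tx by (simp add: field_simps)
    thus ?thesis using tx by simp
  qed
  also have "\<dots> \<le> energy_max * (1 + 1 / x0) / (1 + t)"
    using tx energy_max_pos x0_pos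
    by (intro divide_right_mono mult_left_mono add_left_mono divide_left_mono) auto
  also have "\<dots> \<le> J0_decay_const / (1 + t)"
    unfolding J0_decay_const_def using tx by (intro divide_right_mono) auto
  finally show ?thesis .
qed

lemma J0_decay_const_pos: "J0_decay_const > 0"
  unfolding J0_decay_const_def by simp

lemma mult_J0_sq_le:
  assumes "a > 0" "0 \<le> r"
  shows "r * J0 (a * r) ^2 \<le> J0_decay_const / a"
proof -
  have ar: "1 + a * r > 0" using assms by (simp add: add_pos_nonneg)
  have "r * J0 (a * r) ^2 \<le> r * (J0_decay_const / (1 + a * r))"
    using J0_sq_le_decay[of "a * r"] assms by (intro mult_left_mono) auto
  also have "\<dots> = (J0_decay_const / a) * (a * r / (1 + a * r))" using assms ar by (simp add: field_simps)
  also have "\<dots> \<le> J0_decay_const / a"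
    using ar assms J0_decay_const_pos by (intro mult_left_le) auto
  finally show ?thesis .
qed

lemma
  fixes b :: real
  assumes "b > 0"
  shows integrable_inverse_linear: "integrable lborel (\<lambda>r. 1 / (1 + b * r) * indicator {0..1} r)"
    and integral_inverse_linear: "(LINT r | lborel. 1 / (1 + b * r) * indicator {0..1} r) = ln (1 + b) / b"
proof -
  have meas: "(\<lambda>r. 1 / (1 + b * r)) \<in> borel_measurable borel"
    by simp
  have "((\<lambda>r. ln (1 + b * r) / b) has_real_derivative 1 / (1 + b * x)) (at x)"
    and "0 \<le> 1 / (1 + b * x)" if "x \<in> {0..1}" for x
  proof -
    have pos: "1 + b * x > 0" using assms that by (simp add: add_pos_nonneg)
    have "((\<lambda>r. 1 + b * r) has_real_derivative b) (at x)"
      by (auto intro!: derivative_eq_intros)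
    from DERIV_chain2[OF DERIV_ln_divide[OF pos] this]
    have "((\<lambda>r. ln (1 + b * r)) has_real_derivative (1 / (1 + b * x)) * b) (at x)" .
    from DERIV_cdivide[OF this, of b]
    show "((\<lambda>r. ln (1 + b * r) / b) has_real_derivative 1 / (1 + b * x)) (at x)"
      using assms by simp
    show "0 \<le> 1 / (1 + b * x)" using pos by simp
  qed
  from integrable_FTC_Icc_nonneg[OF meas this] integral_FTC_Icc_nonneg[OF meas this]
  show "integrable lborel (\<lambda>r. 1 / (1 + b * r) * indicator {0..1} r)"
    "(LINT r | lborel. 1 / (1 + b * r) * indicator {0..1} r) = ln (1 + b) / b"
    by simp_all
qed

text \<open>The decay bound applied to one factor as \<open>r J\<^sub>0(ar)\<^sup>2 \<lesssim> 1/a\<close> and to the other as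
  \<open>J\<^sub>0(br)\<^sup>2 \<lesssim> 1/(1 + br)\<close> makes the integral logarithmic in \<open>b\<close>.\<close>
lemma integral_J0_sq_product_le:
  assumes a: "a > 0" and b: "b > 0"
  shows "(LINT r | lborel. indicator {0..1} r * (2 * pi * r * ((J0 (a * r))^2 * (J0 (b * r))^2)))
     \<le> 2 * pi * J0_decay_const^2 / (a * b) * ln (1 + b)"
proof -
  let ?c = "2 * pi * J0_decay_const^2 / a"
  have bound: "indicator {0..1} r * (2 * pi * r * ((J0 (a * r))^2 * (J0 (b * r))^2))
      \<le> ?c * (1 / (1 + b * r) * indicator {0..1} r)" for r
  proof (cases "r \<in> {0..1}")
    case True
    hence r: "0 \<le> r" "1 + b * r > 0" using b by (auto simp: add_pos_nonneg)
    have "(r * (J0 (a * r))^2) * (J0 (b * r))^2 \<le> (J0_decay_const / a) * (J0_decay_const / (1 + b * r))"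
      using mult_J0_sq_le[OF a r(1)] J0_sq_le_decay[of "b * r"] r b J0_decay_const_pos a
      by (intro mult_mono) auto
    hence "2 * pi * ((r * (J0 (a * r))^2) * (J0 (b * r))^2)
        \<le> 2 * pi * ((J0_decay_const / a) * (J0_decay_const / (1 + b * r)))"
      by (intro mult_left_mono) auto
    thus ?thesis using True by (simp add: power2_eq_square mult_ac)
  qed simp
  have "(LINT r | lborel. indicator {0..1} r * (2 * pi * r * ((J0 (a * r))^2 * (J0 (b * r))^2)))
      \<le> (LINT r | lborel. ?c * (1 / (1 + b * r) * indicator {0..1} r))"
  proof (rule integral_mono'[OF integrable_mult_right[OF integrable_inverse_linear[OF b]] bound])
    show "0 \<le> ?c * (1 / (1 + b * r) * indicator {0..1} r)" for r
      using a b by (auto simp: indicator_def add_pos_nonneg less_imp_le)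
  qed
  also have "\<dots> = ?c * (ln (1 + b) / b)"
    unfolding integral_mult_right_zero integral_inverse_linear[OF b] ..
  finally show ?thesis by (simp add: field_simps)
qed

lemma L2sq_efun_mult:
  "L2sq (\<lambda>x. efun n1 x * efun n2 x)
    = (LINT r | lborel. indicator {0..1} r *
        (2 * pi * r * ((J0 (bessel_zero n1 * r))^2 * (J0 (bessel_zero n2 * r))^2)))
      / (L2sq (\<lambda>y. J0 (bessel_zero n1 * norm y)) * L2sq (\<lambda>y. J0 (bessel_zero n2 * norm y)))"
proof -
  define a b where "a = bessel_zero n1" and "b = bessel_zero n2"
  define La Lb where "La = L2sq (\<lambda>y. J0 (a * norm y))" and "Lb = L2sq (\<lambda>y. J0 (b * norm y))"
  have "La > 0" "Lb > 0"
    using L2sq_J0_radial_at_zero_ge[OF bessel_zero_in_J0_zeros] bessel_zero_pos energy_min_pos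
    unfolding La_def Lb_def a_def b_def by (metis divide_pos_pos mult_pos_pos pi_gt_zero order_less_le_trans)+
  hence "(efun n1 x * efun n2 x)^2 = ((J0 (a * norm x))^2 * (J0 (b * norm x))^2) / (La * Lb)" for x
    unfolding efun_def a_def b_def La_def Lb_def by (simp add: power_divide power_mult_distrib)
  hence "L2sq (\<lambda>x. efun n1 x * efun n2 x)
      = (LINT y : Theta | lborel. (J0 (a * norm y))^2 * (J0 (b * norm y))^2) / (La * Lb)"
    unfolding L2sq_def set_lebesgue_integral_def by simp
  also have "\<dots> = (LINT r | lborel. indicator {0..1} r *
        (2 * pi * r * ((J0 (a * r))^2 * (J0 (b * r))^2))) / (La * Lb)"
    using integral_Theta_radial[of "\<lambda>r. (J0 (a * r))^2 * (J0 (b * r))^2"] by simp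
  finally show ?thesis unfolding a_def b_def La_def Lb_def .
qed

lemma ln_bessel_zero_le:
  assumes "1 \<le> N2" "sim n2 N2" "\<epsilon> > 0"
  shows "ln (1 + bessel_zero n2) \<le> (ln 11 + 1 / \<epsilon>) * real N2 powr \<epsilon>"
proof -
  have n2: "1 \<le> n2" "n2 < 2 * N2" using assms by (auto simp: sim_def)
  have "bessel_zero n2 \<le> real n2 * (pi + 1)" using bessel_zero_le n2 by simp
  also have "\<dots> \<le> (2 * real N2) * 5" using n2 pi_less_4 by (intro mult_mono) auto
  finally have "1 + bessel_zero n2 \<le> 11 * real N2" using assms(1) by linarith
  hence "ln (1 + bessel_zero n2) \<le> ln (11 * real N2)"
    using bessel_zero_pos[of n2] by (simp add: add_pos_pos)
  also have "\<dots> = ln 11 + ln (real N2)" using assms(1) by (simp add: ln_mult)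
  also have "ln (real N2) \<le> real N2 powr \<epsilon> / \<epsilon>" using ln_powr_bound assms by simp
  also have "ln 11 \<le> ln 11 * real N2 powr \<epsilon>"
    using ge_one_powr_ge_zero[of "real N2" \<epsilon>] assms by (simp add: mult_le_cancel_left1)
  finally show ?thesis by (simp add: algebra_simps)
qed

text \<open>The two normalising factors are at least \<open>\<pi> energy_min / z\<close>, which cancels the
  \<open>1/(z\<^sub>n\<^sub>1 z\<^sub>n\<^sub>2)\<close> of the product integral and leaves \<open>ln (1 + z\<^sub>n\<^sub>2)\<close>.\<close>
lemma L2sq_efun_mult_le:
  assumes "1 \<le> N2" "sim n2 N2" "\<epsilon> > 0"
  shows "L2sq (\<lambda>x. efun n1 x * efun n2 x)
    \<le> 2 * J0_decay_const^2 / (pi * energy_min^2) * (ln 11 + 1 / \<epsilon>) * real N2 powr \<epsilon>"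
proof -
  define a b where "a = bessel_zero n1" and "b = bessel_zero n2"
  have a: "a > 0" "pi * energy_min / a \<le> L2sq (\<lambda>y. J0 (a * norm y))"
    and b: "b > 0" "pi * energy_min / b \<le> L2sq (\<lambda>y. J0 (b * norm y))"
    unfolding a_def b_def by (simp_all add: bessel_zero_pos L2sq_J0_radial_at_zero_ge bessel_zero_in_J0_zeros)
  have pos: "0 < pi * energy_min / a" "0 < pi * energy_min / b" using a b energy_min_pos by simp_all
  have "L2sq (\<lambda>x. efun n1 x * efun n2 x)
      \<le> 2 * pi * J0_decay_const^2 / (a * b) * ln (1 + b)
        / (L2sq (\<lambda>y. J0 (a * norm y)) * L2sq (\<lambda>y. J0 (b * norm y)))"
    unfolding L2sq_efun_mult a_def[symmetric] b_def[symmetric]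
    using pos a b by (intro divide_right_mono integral_J0_sq_product_le) auto
  also have "\<dots> \<le> 2 * pi * J0_decay_const^2 / (a * b) * ln (1 + b)
        / ((pi * energy_min / a) * (pi * energy_min / b))"
    using pos a b by (intro divide_left_mono mult_mono mult_pos_pos) auto
  also have "\<dots> = 2 * J0_decay_const^2 / (pi * energy_min^2) * ln (1 + b)"
    using a b energy_min_pos by (simp add: field_simps power2_eq_square)
  also have "\<dots> \<le> 2 * J0_decay_const^2 / (pi * energy_min^2) * ((ln 11 + 1 / \<epsilon>) * real N2 powr \<epsilon>)"
    using ln_bessel_zero_le[OF assms] unfolding b_def by (intro mult_left_mono) auto
  finally show ?thesis by (simp add: mult.assoc)
qed

theorem mainTheorem3:
  fixes \<alpha> :: real
  assumes "1 / 2 \<le> \<alpha>" and "\<alpha> < 1"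
  shows "(\<exists>C. \<forall>N1 N2 \<tau>. 1 \<le> N2 \<longrightarrow> N2 \<le> N1 \<longrightarrow>
            real (card (Lambda \<alpha> N1 N2 \<tau>)) \<le> C * real N2)
       \<and> (\<forall>\<epsilon>>0. \<exists>C. \<forall>N1 N2 n1 n2. 1 \<le> N2 \<longrightarrow> N2 \<le> N1 \<longrightarrow> sim n1 N1 \<longrightarrow> sim n2 N2 \<longrightarrow>
            L2sq (\<lambda>x. efun n1 x * efun n2 x) \<le> C * real N2 powr \<epsilon>)"
proof
  show "\<exists>C. \<forall>N1 N2 \<tau>. 1 \<le> N2 \<longrightarrow> N2 \<le> N1 \<longrightarrow> real (card (Lambda \<alpha> N1 N2 \<tau>)) \<le> C * real N2"
    using card_Lambda_le[OF assms] by (metis of_nat_le_iff of_nat_mult)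
  show "\<forall>\<epsilon>>0. \<exists>C. \<forall>N1 N2 n1 n2. 1 \<le> N2 \<longrightarrow> N2 \<le> N1 \<longrightarrow> sim n1 N1 \<longrightarrow> sim n2 N2 \<longrightarrow>
      L2sq (\<lambda>x. efun n1 x * efun n2 x) \<le> C * real N2 powr \<epsilon>"
    using L2sq_efun_mult_le by blast
qed

end
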